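(* Let $n\ge1$, $T\ge1$, $\beta\in(0,1)$, and let $\mathcal{Q}$ be the set of all matrices $D(A)$ with $A\in\mathcal{F}$, and $E=D(B)$. Then: (i) for every $D\in\mathcal{Q}$ and every $\mathbf{z}\in\mathbb{R}^{Tn}$, $\|D\mathbf{z}\|_T\le\|\mathbf{z}\|_T$; (ii) the subspace $W_T:=\{\mathbf{z}=(\mathbf{z}_1^\top,\dots,\mathbf{z}_T^\top)^\top\in\mathbb{R}^{Tn}:\ \mathbf{e}^\top\mathbf{z}_t=0 \text{ for } t=1,\dots,T\}$ satisfies $DW_T\subseteq W_T$ for all $D\in\mathcal{Q}$; (iii) for every non-zero $\mathbf{z}\in W_T$, $\|E\mathbf{z}\|_T<\|\mathbf{z}\|_T$.
   Context: $\mathbf{e}\in\mathbb{R}^n$ is the all-ones vector. For $b\in\{\beta,1\}^n$ the AIMD matrix is $A_b=\operatorname{diag}(b)+\frac1n\mathbf{e}(\mathbf{e}-b)^\top\in\mathbb{R}^{n\times n}$; $\mathcal{F}=\{A_b: b\in\{\beta,1\}^n\}$, and $B:=A_{\beta\mathbf{e}}=\beta I+\frac{1-\beta}{n}\mathbf{e}\mathbf{e}^\top$. For $A\in\mathcal{F}$, $D(A)\in\mathbb{R}^{Tn\times Tn}$ is the $T\times T$ block matrix with $n\times n$ blocks defined by: block row 1 is $(A,0,\dots,0)$; block row 2 (if $T\ge2$) is $(\tfrac12(A+I),0,\dots,0)$; for $3\le \ell\le T$, block row $\ell$ has $\tfrac1\ell A$ in block column 1, $\tfrac{\ell-1}{\ell}I$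 in block column $\ell-1$, and zero blocks elsewhere. For $\mathbf{z}=(\mathbf{z}_1^\top,\dots,\mathbf{z}_T^\top)^\top$ with $\mathbf{z}_\ell\in\mathbb{R}^n$, $\|\mathbf{z}\|_T:=\max_{\ell=1,\dots,T}\|\mathbf{z}_\ell\|_1$, where $\|\cdot\|_1$ is the usual $\ell^1$ norm on $\mathbb{R}^n$. *)

theory Defs
  imports "Jordan_Normal_Form.Matrix"
begin

text \<open>AIMD matrix A_b = diag(b) + (1/n) e (e - b)^T, b given as a function on indices 0..n-1.\<close>
definition AIMD :: "nat \<Rightarrow> (nat \<Rightarrow> real) \<Rightarrow> real mat" where
  "AIMD n b = mat n n (\<lambda>(i,j). (if i = j then b i else 0) + (1 - b j) / real n)"

definition AIMD_family :: "nat \<Rightarrow> real \<Rightarrow> real mat set" where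
  "AIMD_family n \<beta> = {AIMD n b | b. \<forall>i<n. b i \<in> {\<beta>, 1}}"

definition Bmat :: "nat \<Rightarrow> real \<Rightarrow> real mat" where
  "Bmat n \<beta> = AIMD n (\<lambda>_. \<beta>)"

text \<open>The T x T block matrix D(A) with n x n blocks. Block rows/columns are indexed
  0-based here: block row p corresponds to the paper's block row p+1.\<close>
definition Dmat :: "nat \<Rightarrow> nat \<Rightarrow> real mat \<Rightarrow> real mat" where
  "Dmat n T A = mat (T*n) (T*n) (\<lambda>(k,l).
     let p = k div n; q = l div n; i = k mod n; j = l mod n;
         I = (if i = j then 1 else 0 :: real) in
     if p = 0 then (if q = 0 then A $$ (i,j) else 0)
     else if p = 1 then (if q = 0 then (A $$ (i,j) + I) / 2 else 0)
     else (if q = 0 then A $$ (i,j) / real (p+1)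
           else if q = p - 1 then real p / real (p+1) * I else 0))"

definition Qset :: "nat \<Rightarrow> nat \<Rightarrow> real \<Rightarrow> real mat set" where
  "Qset n T \<beta> = Dmat n T ` AIMD_family n \<beta>"

definition Emat :: "nat \<Rightarrow> nat \<Rightarrow> real \<Rightarrow> real mat" where
  "Emat n T \<beta> = Dmat n T (Bmat n \<beta>)"

definition blk :: "nat \<Rightarrow> real vec \<Rightarrow> nat \<Rightarrow> real vec" where
  "blk n z t = vec n (\<lambda>i. z $ (t*n + i))"

definition norm1 :: "real vec \<Rightarrow> real" where
  "norm1 v = (\<Sum>i<dim_vec v. \<bar>v $ i\<bar>)"

definition normT :: "nat \<Rightarrow> nat \<Rightarrow> real vec \<Rightarrow> real" where
  "normT n T z = Max ((\<lambda>t. norm1 (blk n z t)) ` {..<T})"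

definition WT :: "nat \<Rightarrow> nat \<Rightarrow> real vec set" where
  "WT n T = {z \<in> carrier_vec (T*n). \<forall>t<T. (\<Sum>i<n. (blk n z t) $ i) = 0}"

end

theory Submission
  imports Defs
begin

(* With blocks indexed from 0, block p of D(A) z is the convex combination
   (A z_0 + p z_(p-1)) / (p + 1); all three kinds of block rows of D(A) obey this one formula.
   Every A in F is column stochastic, hence an l1-contraction that preserves the coordinate sum.
   So every block of D(A) z has l1-norm at most the largest block norm of z, and zero-sum blocks
   stay zero-sum. On zero-sum vectors B acts as beta I, so for E = D(B) the term A z_0 has norm at
   most beta ||z||_T < ||z||_T, and it enters every block with positive weight. *)

lemma sum_lessThan_mult_blocks:
  fixes f :: "nat \<Rightarrow> 'a::comm_monoid_add"
  shows "(\<Sum>l<T * n. f l) = (\<Sum>q<T. \<Sum>j<n. f (q * n + j))"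
proof -
  have "(\<Sum>l<T * n. f l) = (\<Sum>q<T. \<Sum>l\<in>{q * n..<q * n + n}. f l)"
    by (rule sum.nat_group[symmetric])
  also have "\<dots> = (\<Sum>q<T. \<Sum>j<n. f (q * n + j))"
    using sum.shift_bounds_nat_ivl[of f 0 "_ * n" n] by (simp add: atLeast0LessThan add.commute)
  finally show ?thesis .
qed

lemma block_index_less: "(p::nat) < T \<Longrightarrow> i < n \<Longrightarrow> p * n + i < T * n"
proof -
  assume "p < T" "i < n"
  then have "p * n + i < Suc p * n" by simp
  also have "\<dots> \<le> T * n" using \<open>p < T\<close> by (intro mult_le_mono1) simp
  finally show ?thesis .
qed

lemma index_mult_mat_vec_sum:
  "i < dim_row A \<Longrightarrow> dim_vec v = dim_col A \<Longrightarrow> (A *\<^sub>v v) $ i = (\<Sum>j<dim_col A. A $$ (i, j) * v $ j)"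
  by (simp add: scalar_prod_def lessThan_atLeast0)

lemma Dmat_index_blocks:
  assumes "p < T" "q < T" "i < n" "j < n"
  shows "Dmat n T A $$ (p * n + i, q * n + j) =
    ((if q = 0 then A $$ (i, j) else 0) + (if q = p - 1 \<and> i = j then real p else 0)) / real (p + 1)"
  using block_index_less[OF assms(1,3)] block_index_less[OF assms(2,4)] assms(3,4)
  by (cases "p = 0 \<or> p = 1") (auto simp: Dmat_def Let_def add_divide_distrib)

lemma Dmat_carrier_mat: "Dmat n T A \<in> carrier_mat (T * n) (T * n)"
  by (simp add: Dmat_def)

lemma index_Dmat_mult_vec:
  assumes z: "z \<in> carrier_vec (T * n)" and p: "p < T" and i: "i < n"
  shows "(Dmat n T A *\<^sub>v z) $ (p * n + i)
       = ((\<Sum>j<n. A $$ (i, j) * z $ j) + real p * z $ ((p - 1) * n + i)) / real (p + 1)"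
proof -
  have "(Dmat n T A *\<^sub>v z) $ (p * n + i) = (\<Sum>l<T * n. Dmat n T A $$ (p * n + i, l) * z $ l)"
    using block_index_less[OF p i] z by (simp add: Dmat_def scalar_prod_def lessThan_atLeast0)
  also have "\<dots> = (\<Sum>q<T. \<Sum>j<n. Dmat n T A $$ (p * n + i, q * n + j) * z $ (q * n + j))"
    by (rule sum_lessThan_mult_blocks)
  also have "\<dots> = (\<Sum>q<T. (if q = 0 then (\<Sum>j<n. A $$ (i, j) * z $ j) / real (p + 1) else 0)
                 + (if q = p - 1 then real p / real (p + 1) * z $ ((p - 1) * n + i) else 0))"
  proof (rule sum.cong[OF refl])
    fix q assume "q \<in> {..<T}"
    then have entry: "Dmat n T A $$ (p * n + i, q * n + j) * z $ (q * n + j)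
        = (if q = 0 then A $$ (i, j) * z $ j / real (p + 1) else 0)
          + (if q = p - 1 \<and> j = i then real p / real (p + 1) * z $ ((p - 1) * n + i) else 0)"
      if "j < n" for j
      using p i that by (auto simp: Dmat_index_blocks add_divide_distrib distrib_right)
    have "(\<Sum>j<n. Dmat n T A $$ (p * n + i, q * n + j) * z $ (q * n + j))
        = (\<Sum>j<n. (if q = 0 then A $$ (i, j) * z $ j / real (p + 1) else 0)
          + (if q = p - 1 \<and> j = i then real p / real (p + 1) * z $ ((p - 1) * n + i) else 0))"
      by (rule sum.cong) (simp_all only: lessThan_iff entry)
    also have "\<dots> = (\<Sum>j<n. if q = 0 then A $$ (i, j) * z $ j / real (p + 1) else 0)
          + (\<Sum>j<n. if q = p - 1 \<and> j = i then real p / real (p + 1) * z $ ((p - 1) * n + i) else 0)"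
      by (rule sum.distrib)
    also have "\<dots> = (if q = 0 then (\<Sum>j<n. A $$ (i, j) * z $ j) / real (p + 1) else 0)
          + (if q = p - 1 then real p / real (p + 1) * z $ ((p - 1) * n + i) else 0)"
      using i by (simp add: sum_divide_distrib)
    finally show "(\<Sum>j<n. Dmat n T A $$ (p * n + i, q * n + j) * z $ (q * n + j)) = \<dots>" .
  qed
  also have "\<dots> = ((\<Sum>j<n. A $$ (i, j) * z $ j) + real p * z $ ((p - 1) * n + i)) / real (p + 1)"
    using p by (simp add: sum.distrib add_divide_distrib)
  finally show ?thesis .
qed

lemma blk_Dmat_mult_vec:
  assumes A: "A \<in> carrier_mat n n" and z: "z \<in> carrier_vec (T * n)" and p: "p < T"
  shows "blk n (Dmat n T A *\<^sub>v z) p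
       = (1 / real (p + 1)) \<cdot>\<^sub>v (A *\<^sub>v blk n z 0 + real p \<cdot>\<^sub>v blk n z (p - 1))"
proof (rule eq_vecI)
  fix i assume "i < dim_vec ((1 / real (p + 1)) \<cdot>\<^sub>v (A *\<^sub>v blk n z 0 + real p \<cdot>\<^sub>v blk n z (p - 1)))"
  then have i: "i < n" by (simp add: blk_def)
  then show "blk n (Dmat n T A *\<^sub>v z) p $ i
      = ((1 / real (p + 1)) \<cdot>\<^sub>v (A *\<^sub>v blk n z 0 + real p \<cdot>\<^sub>v blk n z (p - 1))) $ i"
    using A by (simp add: blk_def index_Dmat_mult_vec[OF z p i] index_mult_mat_vec_sum
        del: index_mult_mat_vec)
qed (simp add: blk_def)

lemma norm1_add_le: "dim_vec u = dim_vec v \<Longrightarrow> norm1 (u + v) \<le> norm1 u + norm1 v"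
  unfolding norm1_def by (simp add: sum.distrib[symmetric] sum_mono abs_triangle_ineq)

lemma norm1_smult: "norm1 (c \<cdot>\<^sub>v v) = \<bar>c\<bar> * norm1 v"
  unfolding norm1_def by (simp add: abs_mult sum_distrib_left)

definition column_stochastic :: "real mat \<Rightarrow> bool" where
  "column_stochastic A \<longleftrightarrow> (\<forall>i<dim_row A. \<forall>j<dim_col A. 0 \<le> A $$ (i, j))
     \<and> (\<forall>j<dim_col A. (\<Sum>i<dim_row A. A $$ (i, j)) = 1)"

lemma sum_mult_mat_vec:
  fixes A :: "real mat"
  assumes "\<forall>j<dim_col A. (\<Sum>i<dim_row A. A $$ (i, j)) = 1" and "dim_vec v = dim_col A"
  shows "(\<Sum>i<dim_row A. (A *\<^sub>v v) $ i) = (\<Sum>j<dim_col A. v $ j)"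
proof -
  have "(\<Sum>i<dim_row A. (A *\<^sub>v v) $ i) = (\<Sum>j<dim_col A. (\<Sum>i<dim_row A. A $$ (i, j)) * v $ j)"
    using assms(2) by (simp add: index_mult_mat_vec_sum sum_distrib_right sum.swap[of _ "{..<dim_row A}"]
        del: index_mult_mat_vec)
  also have "\<dots> = (\<Sum>j<dim_col A. v $ j)"
    using assms(1) by (intro sum.cong refl) simp
  finally show ?thesis .
qed

lemma norm1_mult_vec_le:
  assumes A: "column_stochastic A" and v: "dim_vec v = dim_col A"
  shows "norm1 (A *\<^sub>v v) \<le> norm1 v"
proof -
  have "norm1 (A *\<^sub>v v) \<le> (\<Sum>i<dim_row A. \<Sum>j<dim_col A. A $$ (i, j) * \<bar>v $ j\<bar>)"
    unfolding norm1_def dim_mult_mat_vec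
  proof (intro sum_mono)
    fix i assume i: "i \<in> {..<dim_row A}"
    have "\<bar>(A *\<^sub>v v) $ i\<bar> \<le> (\<Sum>j<dim_col A. \<bar>A $$ (i, j) * v $ j\<bar>)"
      using i v by (simp add: index_mult_mat_vec_sum sum_abs del: index_mult_mat_vec)
    also have "\<dots> = (\<Sum>j<dim_col A. A $$ (i, j) * \<bar>v $ j\<bar>)"
      using A i by (intro sum.cong) (auto simp: column_stochastic_def abs_mult)
    finally show "\<bar>(A *\<^sub>v v) $ i\<bar> \<le> (\<Sum>j<dim_col A. A $$ (i, j) * \<bar>v $ j\<bar>)" .
  qed
  also have "\<dots> = (\<Sum>j<dim_col A. (\<Sum>i<dim_row A. A $$ (i, j)) * \<bar>v $ j\<bar>)"
    by (simp add: sum_distrib_right sum.swap[of _ "{..<dim_row A}"])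
  also have "\<dots> = norm1 v"
    using A v by (simp add: column_stochastic_def norm1_def)
  finally show ?thesis .
qed

lemma AIMD_carrier_mat: "AIMD n b \<in> carrier_mat n n"
  by (simp add: AIMD_def)

lemma AIMD_column_stochastic:
  assumes "n \<ge> 1" and "\<forall>i<n. 0 \<le> b i \<and> b i \<le> 1"
  shows "column_stochastic (AIMD n b)"
  unfolding column_stochastic_def
proof (intro conjI allI impI)
  fix i j assume "i < dim_row (AIMD n b)" "j < dim_col (AIMD n b)"
  then show "0 \<le> AIMD n b $$ (i, j)" using assms(2) by (auto simp: AIMD_def)
next
  fix j assume j: "j < dim_col (AIMD n b)"
  then have "(\<Sum>i<dim_row (AIMD n b). AIMD n b $$ (i, j))
      = (\<Sum>i<n. (if i = j then b i else 0)) + real n * ((1 - b j) / real n)"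
    by (simp add: AIMD_def sum.distrib)
  also have "\<dots> = 1" using j assms(1) by (simp add: AIMD_def)
  finally show "(\<Sum>i<dim_row (AIMD n b). AIMD n b $$ (i, j)) = 1" .
qed

lemma Bmat_mult_vec_zero_sum:
  assumes "v \<in> carrier_vec n" and "(\<Sum>j<n. v $ j) = 0"
  shows "Bmat n \<beta> *\<^sub>v v = \<beta> \<cdot>\<^sub>v v"
proof (rule eq_vecI)
  fix i assume "i < dim_vec (\<beta> \<cdot>\<^sub>v v)"
  then have i: "i < n" using assms(1) by simp
  have "(Bmat n \<beta> *\<^sub>v v) $ i = (\<Sum>j<n. ((if i = j then \<beta> else 0) + (1 - \<beta>) / real n) * v $ j)"
    using i assms(1) by (simp add: Bmat_def AIMD_def index_mult_mat_vec_sum del: index_mult_mat_vec)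
  also have "\<dots> = (\<Sum>j<n. (if i = j then \<beta> * v $ j else 0) + (1 - \<beta>) / real n * v $ j)"
    by (intro sum.cong) (auto simp: distrib_right)
  also have "\<dots> = \<beta> * v $ i"
    using i assms(2) by (simp add: sum.distrib sum_divide_distrib[symmetric] sum_distrib_left[symmetric])
  finally show "(Bmat n \<beta> *\<^sub>v v) $ i = (\<beta> \<cdot>\<^sub>v v) $ i"
    using i assms(1) by simp
qed (use assms in \<open>simp add: Bmat_def AIMD_def\<close>)

lemma norm1_blk_le_normT: "t < T \<Longrightarrow> norm1 (blk n z t) \<le> normT n T z"
  unfolding normT_def by (intro Max_ge) auto

lemma normT_le_iff: "0 < T \<Longrightarrow> normT n T z \<le> M \<longleftrightarrow> (\<forall>t<T. norm1 (blk n z t) \<le> M)"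
  unfolding normT_def by (subst Max_le_iff) auto

lemma normT_less_iff: "0 < T \<Longrightarrow> normT n T z < M \<longleftrightarrow> (\<forall>t<T. norm1 (blk n z t) < M)"
  unfolding normT_def by (subst Max_less_iff) auto

lemma normT_pos:
  assumes "z \<in> carrier_vec (T * n)" and "z \<noteq> 0\<^sub>v (T * n)"
  shows "0 < normT n T z"
proof -
  obtain k where k: "k < T * n" "z $ k \<noteq> 0" using assms by (auto simp: vec_eq_iff)
  have "0 < n" using k(1) by (cases n) simp_all
  with k have t: "k div n < T" and i: "k mod n < n"
    by (auto simp: less_mult_imp_div_less)
  have "0 < \<bar>blk n z (k div n) $ (k mod n)\<bar>" using k i by (simp add: blk_def mult.commute)
  also have "\<dots> \<le> norm1 (blk n z (k div n))"
    unfolding norm1_def using i by (intro member_le_sum) (auto simp: blk_def)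
  also have "\<dots> \<le> normT n T z" using t by (rule norm1_blk_le_normT)
  finally show ?thesis .
qed

lemma norm1_blk_Dmat_mult_vec_le:
  assumes A: "A \<in> carrier_mat n n" and z: "z \<in> carrier_vec (T * n)" and p: "p < T"
  shows "norm1 (blk n (Dmat n T A *\<^sub>v z) p)
       \<le> (norm1 (A *\<^sub>v blk n z 0) + real p * normT n T z) / real (p + 1)"
proof -
  have "norm1 (blk n (Dmat n T A *\<^sub>v z) p)
      = norm1 (A *\<^sub>v blk n z 0 + real p \<cdot>\<^sub>v blk n z (p - 1)) / real (p + 1)"
    by (simp add: blk_Dmat_mult_vec[OF A z p] norm1_smult)
  also have "\<dots> \<le> (norm1 (A *\<^sub>v blk n z 0) + real p * norm1 (blk n z (p - 1))) / real (p + 1)"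
    using A norm1_add_le[of "A *\<^sub>v blk n z 0" "real p \<cdot>\<^sub>v blk n z (p - 1)"]
    by (intro divide_right_mono) (simp_all add: norm1_smult blk_def)
  also have "\<dots> \<le> (norm1 (A *\<^sub>v blk n z 0) + real p * normT n T z) / real (p + 1)"
    using p by (intro divide_right_mono add_left_mono mult_left_mono norm1_blk_le_normT) auto
  finally show ?thesis .
qed

lemma normT_Dmat_mult_vec_le:
  assumes A: "A \<in> carrier_mat n n" and z: "z \<in> carrier_vec (T * n)" and T: "0 < T"
    and first: "norm1 (A *\<^sub>v blk n z 0) \<le> normT n T z"
  shows "normT n T (Dmat n T A *\<^sub>v z) \<le> normT n T z"
  unfolding normT_le_iff[OF T]
proof (intro allI impI)
  fix p assume p: "p < T"
  have "norm1 (blk n (Dmat n T A *\<^sub>v z) p)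
      \<le> (norm1 (A *\<^sub>v blk n z 0) + real p * normT n T z) / real (p + 1)"
    by (rule norm1_blk_Dmat_mult_vec_le[OF A z p])
  also have "\<dots> \<le> normT n T z"
    using first by (simp add: field_simps)
  finally show "norm1 (blk n (Dmat n T A *\<^sub>v z) p) \<le> normT n T z" .
qed

lemma normT_Dmat_mult_vec_less:
  assumes A: "A \<in> carrier_mat n n" and z: "z \<in> carrier_vec (T * n)" and T: "0 < T"
    and first: "norm1 (A *\<^sub>v blk n z 0) < normT n T z"
  shows "normT n T (Dmat n T A *\<^sub>v z) < normT n T z"
  unfolding normT_less_iff[OF T]
proof (intro allI impI)
  fix p assume p: "p < T"
  have "norm1 (blk n (Dmat n T A *\<^sub>v z) p)
      \<le> (norm1 (A *\<^sub>v blk n z 0) + real p * normT n T z) / real (p + 1)"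
    by (rule norm1_blk_Dmat_mult_vec_le[OF A z p])
  also have "\<dots> < normT n T z"
    using first by (simp add: field_simps)
  finally show "norm1 (blk n (Dmat n T A *\<^sub>v z) p) < normT n T z" .
qed

lemma Dmat_mult_vec_WT:
  fixes A :: "real mat"
  assumes A: "A \<in> carrier_mat n n" and cols: "\<forall>j<n. (\<Sum>i<n. A $$ (i, j)) = 1" and z: "z \<in> WT n T"
  shows "Dmat n T A *\<^sub>v z \<in> WT n T"
proof -
  have zc: "z \<in> carrier_vec (T * n)" and zs: "\<And>t. t < T \<Longrightarrow> (\<Sum>i<n. blk n z t $ i) = 0"
    using z by (auto simp: WT_def)
  have "Dmat n T A *\<^sub>v z \<in> carrier_vec (T * n)"
    using Dmat_carrier_mat zc by (rule mult_mat_vec_carrier)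
  moreover have "(\<Sum>i<n. blk n (Dmat n T A *\<^sub>v z) p $ i) = 0" if p: "p < T" for p
  proof -
    have "(\<Sum>i<n. blk n (Dmat n T A *\<^sub>v z) p $ i)
        = ((\<Sum>i<n. (A *\<^sub>v blk n z 0) $ i) + real p * (\<Sum>i<n. blk n z (p - 1) $ i)) / real (p + 1)"
      unfolding blk_Dmat_mult_vec[OF A zc p] using A
      by (simp add: sum.distrib sum_distrib_left sum_divide_distrib blk_def add_divide_distrib
          del: index_mult_mat_vec)
    also have "(\<Sum>i<n. (A *\<^sub>v blk n z 0) $ i) = (\<Sum>j<n. blk n z 0 $ j)"
      using sum_mult_mat_vec[of A "blk n z 0"] A cols by (simp add: blk_def)
    finally show ?thesis using zs[of 0] zs[of "p - 1"] p by simp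
  qed
  ultimately show ?thesis unfolding WT_def by blast
qed


theorem lemma1:
  fixes n T :: nat and \<beta> :: real
  assumes "n \<ge> 1" and "T \<ge> 1" and "0 < \<beta>" and "\<beta> < 1"
  shows "(\<forall>D \<in> Qset n T \<beta>. \<forall>z \<in> carrier_vec (T*n). normT n T (D *\<^sub>v z) \<le> normT n T z)
       \<and> (\<forall>D \<in> Qset n T \<beta>. \<forall>z \<in> WT n T. D *\<^sub>v z \<in> WT n T)
       \<and> (\<forall>z \<in> WT n T. z \<noteq> 0\<^sub>v (T*n) \<longrightarrow> normT n T (Emat n T \<beta> *\<^sub>v z) < normT n T z)"
proof -
  have T: "0 < T" using assms(2) by simp
  have Q: "\<exists>A. A \<in> carrier_mat n n \<and> column_stochastic A \<and> D = Dmat n T A" if D: "D \<in> Qset n T \<beta>" for D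
  proof -
    obtain b where b: "\<forall>i<n. b i \<in> {\<beta>, 1}" and D': "D = Dmat n T (AIMD n b)"
      using D by (auto simp: Qset_def AIMD_family_def)
    have "column_stochastic (AIMD n b)"
      using assms(1,3,4) b by (intro AIMD_column_stochastic) auto
    with D' AIMD_carrier_mat show ?thesis by blast
  qed
  have contraction: "normT n T (D *\<^sub>v z) \<le> normT n T z"
    if DQ: "D \<in> Qset n T \<beta>" and z: "z \<in> carrier_vec (T * n)" for D z
  proof -
    obtain A where A: "A \<in> carrier_mat n n" "column_stochastic A" and D: "D = Dmat n T A"
      using Q[OF DQ] by blast
    have "norm1 (A *\<^sub>v blk n z 0) \<le> norm1 (blk n z 0)"
      using A by (intro norm1_mult_vec_le) (auto simp: blk_def)
    also have "\<dots> \<le> normT n T z" using T by (rule norm1_blk_le_normT)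
    finally show ?thesis unfolding D using A(1) z T by (intro normT_Dmat_mult_vec_le)
  qed
  have invariance: "D *\<^sub>v z \<in> WT n T" if DQ: "D \<in> Qset n T \<beta>" and z: "z \<in> WT n T" for D z
  proof -
    obtain A where A: "A \<in> carrier_mat n n" "column_stochastic A" and D: "D = Dmat n T A"
      using Q[OF DQ] by blast
    then show ?thesis using z by (auto simp: column_stochastic_def intro!: Dmat_mult_vec_WT)
  qed
  have strict: "normT n T (Emat n T \<beta> *\<^sub>v z) < normT n T z"
    if z: "z \<in> WT n T" and nz: "z \<noteq> 0\<^sub>v (T * n)" for z
  proof -
    have zc: "z \<in> carrier_vec (T * n)" and "(\<Sum>j<n. blk n z 0 $ j) = 0"
      using z T by (auto simp: WT_def)
    then have "Bmat n \<beta> *\<^sub>v blk n z 0 = \<beta> \<cdot>\<^sub>v blk n z 0"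
      by (intro Bmat_mult_vec_zero_sum) (simp add: blk_def)
    then have "norm1 (Bmat n \<beta> *\<^sub>v blk n z 0) = \<beta> * norm1 (blk n z 0)"
      using assms(3) by (simp add: norm1_smult)
    also have "\<dots> \<le> \<beta> * normT n T z"
      using norm1_blk_le_normT[OF T] assms(3) by simp
    also have "\<dots> < normT n T z"
      using normT_pos[OF zc nz] assms(4) by simp
    finally show ?thesis
      unfolding Emat_def using zc T
      by (intro normT_Dmat_mult_vec_less) (simp_all add: Bmat_def AIMD_carrier_mat)
  qed
  show ?thesis using contraction invariance strict by blast
qed

end
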